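(* Let $X$ be a quasi-Polish space and $E$ an equivalence relation on $X$ such that the $E$-saturation of every open set is open. Then one may adjoin countably many $E$-invariant closed sets to the topology of $X$ so that, for the resulting topology, $X/\!/E$ has the same elements (the same $\approx_E$-classes) as before but is Polish.
   Context: For a topology on $X$, $x\approx_E y$ iff $\overline{[x]_E}=\overline{[y]_E}$, and $X/\!/E:=X/{\approx_E}$ with the quotient topology. A quasi-Polish space is a space homeomorphic to a $\mathbf\Pi^0_2$ subset of $\mathbb S^{\mathbb N}$, where $\mathbb S$ is the Sierpiński space and $\mathbf\Pi^0_2$ means a countable intersection of sets $U\cup F$ with $U$ open and $F$ closed. *)

theory Defs
  imports "HOL-Analysis.Analysis"
begin

definition sierpinski_space :: "bool topology" where
  "sierpinski_space = topology (\<lambda>U. U \<in> {{}, {True}, UNIV})"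

definition sierpinski_power :: "(nat \<Rightarrow> bool) topology" where
  "sierpinski_power = product_topology (\<lambda>_. sierpinski_space) UNIV"

definition Pi02_in :: "'a topology \<Rightarrow> 'a set \<Rightarrow> bool" where
  "Pi02_in Y A \<longleftrightarrow> (\<exists>U F :: nat \<Rightarrow> 'a set.
      (\<forall>n. openin Y (U n) \<and> closedin Y (F n)) \<and> A = topspace Y \<inter> (\<Inter>n. U n \<union> F n))"

definition quasi_Polish_space :: "'a topology \<Rightarrow> bool" where
  "quasi_Polish_space X \<longleftrightarrow> (\<exists>A. Pi02_in sierpinski_power A \<and>
      X homeomorphic_space subtopology sierpinski_power A)"

definition Polish_space :: "'a topology \<Rightarrow> bool" where
  "Polish_space X \<longleftrightarrow> completely_metrizable_space X \<and> separable_space X"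

definition closure_equiv :: "'a topology \<Rightarrow> 'a rel \<Rightarrow> 'a rel" where
  "closure_equiv X E = {(x, y). x \<in> topspace X \<and> y \<in> topspace X \<and>
      X closure_of (E `` {x}) = X closure_of (E `` {y})}"

definition quotient_topology :: "'a topology \<Rightarrow> 'a rel \<Rightarrow> 'a set topology" where
  "quotient_topology X R = topology (\<lambda>U. U \<subseteq> topspace X // R \<and>
      openin X {x \<in> topspace X. R `` {x} \<in> U})"

definition closure_quotient :: "'a topology \<Rightarrow> 'a rel \<Rightarrow> 'a set topology" where
  "closure_quotient X E = quotient_topology X (closure_equiv X E)"

end

theory Submission
  imports Defs
begin

text \<open>Fix a countable base B n of X and let sat n be its E-saturation, an invariant open set by
  hypothesis. The code of x, the sequence of truth values of x \<in> sat n, separates exactly the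
  classes of the closure equivalence. Adjoining the invariant closed complements of the sets
  sat n makes the code continuous and open onto its image without changing the closure
  equivalence, so the new X//E is homeomorphic to the image of the code in Cantor space.
  Using a Pi^0_2 presentation of X inside S^N, this image is cut out by countably many open
  conditions: a sequence satisfying them is realised by the limit of a chain of basic sets that
  is driven into U k whenever it avoids F k. Being G_delta in Cantor space, the image is Polish.\<close>

section \<open>Sierpinski space and Cantor space\<close>

lemma openin_sierpinski_space: "openin sierpinski_space U \<longleftrightarrow> U = {} \<or> U = {True} \<or> U = UNIV"
proof -
  have "istopology (\<lambda>U::bool set. U \<in> {{}, {True}, UNIV})"
    unfolding istopology_def by (auto simp: Union_empty_conv)
  then show ?thesis
    unfolding sierpinski_space_def by simp
qed

lemma topspace_sierpinski_space [simp]: "topspace sierpinski_space = UNIV"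
  unfolding topspace_def using openin_sierpinski_space by auto

lemma topspace_sierpinski_power [simp]: "topspace sierpinski_power = UNIV"
  unfolding sierpinski_power_def by simp

definition sierpinski_box :: "nat set \<Rightarrow> (nat \<Rightarrow> bool) set" where
  "sierpinski_box t = {b. \<forall>i\<in>t. b i}"

lemma sierpinski_box_antimono: "s \<subseteq> t \<Longrightarrow> sierpinski_box t \<subseteq> sierpinski_box s"
  unfolding sierpinski_box_def by auto

lemma openin_sierpinski_box:
  assumes "finite t"
  shows "openin sierpinski_power (sierpinski_box t)"
proof -
  define V where "V i = (if i \<in> t then {True} else UNIV)" for i
  have box: "sierpinski_box t = Pi\<^sub>E UNIV V"
    by (auto simp: sierpinski_box_def V_def PiE_def Pi_def)
  have "openin sierpinski_space (V i)" for i
    by (simp add: V_def openin_sierpinski_space)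
  moreover have "finite {i. V i \<noteq> topspace sierpinski_space}"
    using assms by (rule rev_finite_subset) (auto simp: V_def)
  ultimately show ?thesis
    unfolding sierpinski_power_def box by (rule product_topology_basis)
qed

lemma sierpinski_power_base:
  assumes "openin sierpinski_power V" "b \<in> V"
  obtains t where "finite t" "b \<in> sierpinski_box t" "sierpinski_box t \<subseteq> V"
proof -
  obtain W where W: "finite {i. W i \<noteq> UNIV}" "\<And>i. openin sierpinski_space (W i)"
    "b \<in> Pi\<^sub>E UNIV W" "Pi\<^sub>E UNIV W \<subseteq> V"
    using assms unfolding sierpinski_power_def openin_product_topology_alt by auto
  have W_cases: "W i = UNIV \<or> W i = {True}" for i
  proof -
    have "b i \<in> W i"
      using W(3) by (simp add: PiE_iff)
    then show ?thesis
      using W(2)[of i] unfolding openin_sierpinski_space by blast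
  qed
  have "c \<in> Pi\<^sub>E UNIV W \<longleftrightarrow> c \<in> sierpinski_box {i. W i \<noteq> UNIV}" for c
  proof -
    have "c i \<in> W i \<longleftrightarrow> (W i \<noteq> UNIV \<longrightarrow> c i)" for i
      using W_cases[of i] by auto
    then show ?thesis
      by (simp add: PiE_iff sierpinski_box_def)
  qed
  then have "Pi\<^sub>E UNIV W = sierpinski_box {i. W i \<noteq> UNIV}"
    by blast
  with W that show thesis
    by auto
qed

abbreviation cantor_space :: "(nat \<Rightarrow> bool) topology" where
  "cantor_space \<equiv> product_topology (\<lambda>_. discrete_topology UNIV) UNIV"

lemma openin_cantor_space_coordinate: "openin cantor_space {z. z i}"
  and openin_cantor_space_not_coordinate: "openin cantor_space {z. \<not> z i}"
  using openin_continuous_map_preimage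
    [OF continuous_map_product_projection[of i UNIV "\<lambda>_. discrete_topology UNIV"], of "{True}"]
    openin_continuous_map_preimage
    [OF continuous_map_product_projection[of i UNIV "\<lambda>_. discrete_topology UNIV"], of "{False}"]
  by simp_all

lemma second_countable_cantor_space: "second_countable cantor_space"
  unfolding second_countable_def
proof (intro exI conjI ballI allI impI)
  define cyl :: "nat set \<times> nat set \<Rightarrow> (nat \<Rightarrow> bool) set"
    where "cyl = (\<lambda>(p, q). {z. (\<forall>i\<in>p. z i) \<and> (\<forall>i\<in>q. \<not> z i)})"
  let ?\<B> = "cyl ` (Collect finite \<times> Collect finite)"
  show "countable ?\<B>"
    by (intro countable_image countable_SIGMA countable_Collect_finite)
  show "openin cantor_space V" if V: "V \<in> ?\<B>" for V
  proof -
    obtain p q where pq: "finite p" "finite q" "V = cyl (p, q)"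
      using V by blast
    define W where "W i = {b. (i \<in> p \<longrightarrow> b) \<and> (i \<in> q \<longrightarrow> \<not> b)}" for i
    have "V = Pi\<^sub>E UNIV W"
      by (auto simp: pq cyl_def W_def PiE_iff)
    moreover have "finite {i. W i \<noteq> topspace (discrete_topology UNIV)}"
      by (rule finite_subset[of _ "p \<union> q"]) (auto simp: W_def pq)
    ultimately show ?thesis
      using product_topology_basis[of "\<lambda>_. discrete_topology UNIV" W UNIV] by simp
  qed
  show "\<exists>V\<in>?\<B>. z \<in> V \<and> V \<subseteq> U" if U: "openin cantor_space U \<and> z \<in> U" for U z
  proof -
    obtain W where W: "finite {i. W i \<noteq> UNIV}" "z \<in> Pi\<^sub>E UNIV W" "Pi\<^sub>E UNIV W \<subseteq> U"
      using U unfolding openin_product_topology_alt by auto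
    define J where "J = {i. W i \<noteq> UNIV}"
    have "cyl ({i\<in>J. z i}, {i\<in>J. \<not> z i}) \<subseteq> Pi\<^sub>E UNIV W"
    proof
      fix c assume c: "c \<in> cyl ({i\<in>J. z i}, {i\<in>J. \<not> z i})"
      have "c i \<in> W i" for i
      proof (cases "i \<in> J")
        case True
        then have "c i = z i"
          using c by (auto simp: cyl_def)
        then show ?thesis
          using W(2) by (simp add: PiE_iff)
      qed (simp add: J_def)
      then show "c \<in> Pi\<^sub>E UNIV W"
        by (simp add: PiE_iff)
    qed
    moreover have "z \<in> cyl ({i\<in>J. z i}, {i\<in>J. \<not> z i})"
      by (simp add: cyl_def)
    moreover have "({i\<in>J. z i}, {i\<in>J. \<not> z i}) \<in> Collect finite \<times> Collect finite"
      using W(1) by (simp add: J_def)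
    ultimately show ?thesis
      using W(3) by blast
  qed
qed

lemma Polish_space_gdelta_in_cantor_space:
  assumes "gdelta_in cantor_space S"
  shows "Polish_space (subtopology cantor_space S)"
  unfolding Polish_space_def
proof
  show "completely_metrizable_space (subtopology cantor_space S)"
    by (rule completely_metrizable_space_gdelta_in[OF _ assms])
      (simp add: completely_metrizable_space_product_topology completely_metrizable_space_discrete_topology)
  show "separable_space (subtopology cantor_space S)"
    by (simp add: second_countable_imp_separable_space second_countable_subtopology second_countable_cantor_space)
qed

lemma homeomorphic_Polish_space: "X homeomorphic_space Y \<Longrightarrow> Polish_space Y \<Longrightarrow> Polish_space X"
  unfolding Polish_space_def
  by (meson homeomorphic_completely_metrizable_space homeomorphic_separable_space)

section \<open>Quotient topologies\<close>

lemma openin_quotient_topology: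
  "openin (quotient_topology T R) U \<longleftrightarrow> U \<subseteq> topspace T // R \<and> openin T {x \<in> topspace T. R `` {x} \<in> U}"
proof -
  have "istopology (\<lambda>U. U \<subseteq> topspace T // R \<and> openin T {x \<in> topspace T. R `` {x} \<in> U})"
    unfolding istopology_def
  proof (rule conjI; intro allI impI)
    fix U U' assume "U \<subseteq> topspace T // R \<and> openin T {x \<in> topspace T. R `` {x} \<in> U}"
      "U' \<subseteq> topspace T // R \<and> openin T {x \<in> topspace T. R `` {x} \<in> U'}"
    moreover have "{x \<in> topspace T. R `` {x} \<in> U \<inter> U'} =
        {x \<in> topspace T. R `` {x} \<in> U} \<inter> {x \<in> topspace T. R `` {x} \<in> U'}"
      by blast
    ultimately show "U \<inter> U' \<subseteq> topspace T // R \<and> openin T {x \<in> topspace T. R `` {x} \<in> U \<inter> U'}"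
      by (simp add: le_infI1 openin_Int)
  next
    fix \<K> assume \<K>: "\<forall>U\<in>\<K>. U \<subseteq> topspace T // R \<and> openin T {x \<in> topspace T. R `` {x} \<in> U}"
    have "{x \<in> topspace T. R `` {x} \<in> \<Union>\<K>} = (\<Union>U\<in>\<K>. {x \<in> topspace T. R `` {x} \<in> U})"
      by blast
    with \<K> show "\<Union>\<K> \<subseteq> topspace T // R \<and> openin T {x \<in> topspace T. R `` {x} \<in> \<Union>\<K>}"
      by (simp add: Sup_least openin_clauses(3))
  qed
  then show ?thesis
    unfolding quotient_topology_def by simp
qed

lemma topspace_quotient_topology: "topspace (quotient_topology T R) = topspace T // R"
proof
  show "topspace (quotient_topology T R) \<subseteq> topspace T // R"
    using openin_topspace[of "quotient_topology T R"] unfolding openin_quotient_topology by blast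
  have "{x \<in> topspace T. R `` {x} \<in> topspace T // R} = topspace T"
    by (auto intro: quotientI)
  then show "topspace T // R \<subseteq> topspace (quotient_topology T R)"
    by (simp add: openin_quotient_topology openin_subset)
qed

lemma quotient_map_quotient_topology: "quotient_map T (quotient_topology T R) (\<lambda>x. R `` {x})"
  unfolding quotient_map_def topspace_quotient_topology openin_quotient_topology
  by (auto simp: quotient_def)

lemma homeomorphic_space_quotient_maps_same_fibres:
  assumes f: "quotient_map X Y f" and g: "quotient_map X Z g"
    and fibres: "\<And>x y. \<lbrakk>x \<in> topspace X; y \<in> topspace X\<rbrakk> \<Longrightarrow> f x = f y \<longleftrightarrow> g x = g y"
  shows "Y homeomorphic_space Z"
proof -
  obtain \<phi> where \<phi>: "continuous_map Y Z \<phi>" "\<And>x. x \<in> topspace X \<Longrightarrow> \<phi> (f x) = g x"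
  proof (rule quotient_map_lift_exists[OF f quotient_imp_continuous_map[OF g]])
    show "g x = g y" if "x \<in> topspace X" "y \<in> topspace X" "f x = f y" for x y
      using fibres[OF that(1,2)] that(3) by simp
  qed (rule that, assumption+)
  obtain \<psi> where \<psi>: "continuous_map Z Y \<psi>" "\<And>x. x \<in> topspace X \<Longrightarrow> \<psi> (g x) = f x"
  proof (rule quotient_map_lift_exists[OF g quotient_imp_continuous_map[OF f]])
    show "f x = f y" if "x \<in> topspace X" "y \<in> topspace X" "g x = g y" for x y
      using fibres[OF that(1,2)] that(3) by simp
  qed (rule that, assumption+)
  have "\<psi> (\<phi> y) = y" if y: "y \<in> topspace Y" for y
  proof -
    obtain x where "x \<in> topspace X" "y = f x"
      using y quotient_imp_surjective_map[OF f] by blast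
    then show ?thesis
      using \<phi>(2) \<psi>(2) by simp
  qed
  moreover have "\<phi> (\<psi> z) = z" if z: "z \<in> topspace Z" for z
  proof -
    obtain x where "x \<in> topspace X" "z = g x"
      using z quotient_imp_surjective_map[OF g] by blast
    then show ?thesis
      using \<phi>(2) \<psi>(2) by simp
  qed
  ultimately have "homeomorphic_maps Y Z \<phi> \<psi>"
    using \<phi>(1) \<psi>(1) by (simp add: homeomorphic_maps_def)
  then show ?thesis
    unfolding homeomorphic_space_def by blast
qed

lemma closure_of_eq_iff_meets_same_opens:
  "T closure_of A = T closure_of B \<longleftrightarrow> (\<forall>V. openin T V \<longrightarrow> (A \<inter> V \<noteq> {} \<longleftrightarrow> B \<inter> V \<noteq> {}))"
proof
  assume "T closure_of A = T closure_of B"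
  then show "\<forall>V. openin T V \<longrightarrow> (A \<inter> V \<noteq> {} \<longleftrightarrow> B \<inter> V \<noteq> {})"
    by (metis Int_commute openin_Int_closure_of_eq_empty)
next
  assume "\<forall>V. openin T V \<longrightarrow> (A \<inter> V \<noteq> {} \<longleftrightarrow> B \<inter> V \<noteq> {})"
  then show "T closure_of A = T closure_of B"
    unfolding set_eq_iff in_closure_of by blast
qed

lemma closure_equiv_iff_saturations:
  assumes "equiv (topspace T) E"
  shows "(x, y) \<in> closure_equiv T E \<longleftrightarrow> x \<in> topspace T \<and> y \<in> topspace T \<and>
     (\<forall>V. openin T V \<longrightarrow> (x \<in> E `` V \<longleftrightarrow> y \<in> E `` V))"
proof -
  have "E `` {a} \<inter> V \<noteq> {} \<longleftrightarrow> a \<in> E `` V" for a V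
    using assms by (auto simp: equiv_def elim: symE)
  then show ?thesis
    unfolding closure_equiv_def closure_of_eq_iff_meets_same_opens by auto
qed

section \<open>Refining a topology by invariant closed sets\<close>

locale saturated_basis =
  fixes X :: "'a topology" and E :: "'a rel" and B :: "nat \<Rightarrow> 'a set"
  assumes equiv_E: "equiv (topspace X) E"
    and openin_saturation: "\<And>V. openin X V \<Longrightarrow> openin X (E `` V)"
    and openin_B: "\<And>n. openin X (B n)"
    and B_base: "\<And>V x. \<lbrakk>openin X V; x \<in> V\<rbrakk> \<Longrightarrow> \<exists>n. x \<in> B n \<and> B n \<subseteq> V"
begin

lemma E_in_topspace: "(x, y) \<in> E \<Longrightarrow> x \<in> topspace X \<and> y \<in> topspace X"
  using equiv_E by (auto simp: equiv_def refl_on_def)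

lemma E_refl: "x \<in> topspace X \<Longrightarrow> (x, x) \<in> E"
  using equiv_E by (auto simp: equiv_def refl_on_def)

lemma E_sym: "(x, y) \<in> E \<Longrightarrow> (y, x) \<in> E"
  using equiv_E by (auto simp: equiv_def elim: symE)

lemma E_trans: "\<lbrakk>(x, y) \<in> E; (y, z) \<in> E\<rbrakk> \<Longrightarrow> (x, z) \<in> E"
  using equiv_E by (auto simp: equiv_def elim: transE)

definition sat :: "nat \<Rightarrow> 'a set" where
  "sat n = E `` B n"

definition sat_code :: "'a \<Rightarrow> nat \<Rightarrow> bool" where
  "sat_code x n \<longleftrightarrow> x \<in> sat n"

definition invariant_closed :: "'a set set" where
  "invariant_closed = range (\<lambda>n. topspace X - sat n)"

abbreviation refined :: "'a topology" where
  "refined \<equiv> topology_generated_by ({V. openin X V} \<union> invariant_closed)"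

lemma openin_sat: "openin X (sat n)"
  unfolding sat_def by (rule openin_saturation[OF openin_B])

lemma sat_E_invariant: "(x, y) \<in> E \<Longrightarrow> x \<in> sat n \<longleftrightarrow> y \<in> sat n"
  unfolding sat_def using E_sym E_trans by blast

lemma sat_code_E: "(x, y) \<in> E \<Longrightarrow> sat_code x = sat_code y"
  unfolding sat_code_def using sat_E_invariant by blast

lemma B_subset_sat: "B n \<subseteq> sat n"
  unfolding sat_def using openin_subset[OF openin_B] E_refl by blast

lemma countable_invariant_closed: "countable invariant_closed"
  unfolding invariant_closed_def by simp

lemma invariant_closedD:
  assumes "F \<in> invariant_closed"
  shows "closedin X F" "E `` F = F"
proof -
  obtain n where F: "F = topspace X - sat n"
    using assms unfolding invariant_closed_def by blast
  then show "closedin X F"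
    by (simp add: closedin_diff openin_sat)
  show "E `` F = F"
    unfolding F using E_in_topspace E_refl sat_E_invariant by blast
qed

lemma topspace_refined: "topspace refined = topspace X"
proof -
  have "\<Union>({V. openin X V} \<union> invariant_closed) = topspace X"
    unfolding invariant_closed_def using openin_subset by blast
  then show ?thesis
    by simp
qed

lemma openin_refined: "openin X V \<Longrightarrow> openin refined V"
  by (simp add: topology_generated_by_Basis)

lemma continuous_map_sat_code: "continuous_map refined cantor_space sat_code"
  unfolding continuous_map_componentwise_UNIV
proof
  fix n
  have "openin refined (topspace X - sat n)"
    by (simp add: topology_generated_by_Basis invariant_closed_def)
  moreover have "{x \<in> topspace X. sat_code x n \<in> P} =
      (if True \<in> P then sat n else {}) \<union> (if False \<in> P then topspace X - sat n else {})" for P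
  proof -
    have "(x \<in> sat n) \<in> P \<longleftrightarrow> (x \<in> sat n \<and> True \<in> P) \<or> (x \<notin> sat n \<and> False \<in> P)" for x
      by (cases "x \<in> sat n") auto
    then show ?thesis
      using openin_subset[OF openin_sat] by (auto simp: sat_code_def)
  qed
  ultimately show "continuous_map refined (discrete_topology UNIV) (\<lambda>x. sat_code x n)"
    unfolding continuous_map_def topspace_refined by (simp add: openin_refined[OF openin_sat] openin_Un)
qed

definition join_open :: "'a set \<Rightarrow> bool" where
  "join_open V \<longleftrightarrow> (\<forall>x\<in>V. \<exists>U Q. openin X U \<and> openin cantor_space Q \<and> x \<in> U \<and> sat_code x \<in> Q \<and>
     {y \<in> U. sat_code y \<in> Q} \<subseteq> V)"

lemma join_open_Int:
  assumes "join_open V" "join_open V'"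
  shows "join_open (V \<inter> V')"
  unfolding join_open_def
proof
  fix x assume x: "x \<in> V \<inter> V'"
  obtain U Q where UQ: "openin X U" "openin cantor_space Q" "x \<in> U" "sat_code x \<in> Q"
      "{y \<in> U. sat_code y \<in> Q} \<subseteq> V"
    using assms(1) x unfolding join_open_def by blast
  obtain U' Q' where UQ': "openin X U'" "openin cantor_space Q'" "x \<in> U'" "sat_code x \<in> Q'"
      "{y \<in> U'. sat_code y \<in> Q'} \<subseteq> V'"
    using assms(2) x unfolding join_open_def by blast
  have "{y \<in> U \<inter> U'. sat_code y \<in> Q \<inter> Q'} \<subseteq> V \<inter> V'"
    using UQ(5) UQ'(5) by blast
  with UQ UQ' show "\<exists>U Q. openin X U \<and> openin cantor_space Q \<and> x \<in> U \<and> sat_code x \<in> Q \<and>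
      {y \<in> U. sat_code y \<in> Q} \<subseteq> V \<inter> V'"
    by (intro exI[of _ "U \<inter> U'"] exI[of _ "Q \<inter> Q'"]) (simp add: openin_Int)
qed

lemma join_open_Union:
  assumes "\<And>V. V \<in> \<K> \<Longrightarrow> join_open V"
  shows "join_open (\<Union>\<K>)"
  unfolding join_open_def
proof
  fix x assume "x \<in> \<Union>\<K>"
  then obtain V where V: "V \<in> \<K>" "x \<in> V"
    by blast
  obtain U Q where "openin X U" "openin cantor_space Q" "x \<in> U" "sat_code x \<in> Q"
      "{y \<in> U. sat_code y \<in> Q} \<subseteq> V"
    using assms[OF V(1)] V(2) unfolding join_open_def by blast
  moreover have "V \<subseteq> \<Union>\<K>"
    using V(1) by blast
  ultimately show "\<exists>U Q. openin X U \<and> openin cantor_space Q \<and> x \<in> U \<and> sat_code x \<in> Q \<and>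
      {y \<in> U. sat_code y \<in> Q} \<subseteq> \<Union>\<K>"
    by (intro exI[of _ U] exI[of _ Q]) simp
qed

lemma join_open_openin:
  assumes "openin X V"
  shows "join_open V"
proof -
  have "openin cantor_space UNIV"
    using openin_topspace[of cantor_space] by simp
  then show ?thesis
    using assms unfolding join_open_def by blast
qed

lemma join_open_invariant_closed:
  assumes "V \<in> invariant_closed"
  shows "join_open V"
proof -
  obtain n where V: "V = topspace X - sat n"
    using assms unfolding invariant_closed_def by blast
  then have "{y \<in> topspace X. sat_code y \<in> {z. \<not> z n}} \<subseteq> V"
    by (auto simp: sat_code_def)
  moreover have "x \<in> topspace X" "sat_code x \<in> {z. \<not> z n}" if "x \<in> V" for x
    using that V by (auto simp: sat_code_def)
  ultimately show ?thesis
    unfolding join_open_def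
    using openin_topspace[of X] openin_cantor_space_not_coordinate[of n] by blast
qed

lemma openin_refined_imp_join_open:
  assumes "openin refined V"
  shows "join_open V"
proof -
  have "generate_topology_on ({V. openin X V} \<union> invariant_closed) V"
    using assms openin_topology_generated_by_iff by blast
  then show ?thesis
  proof (induction rule: generate_topology_on.induct)
    case Empty
    then show ?case
      by (simp add: join_open_def)
  qed (auto intro: join_open_Int join_open_Union join_open_openin join_open_invariant_closed)
qed

text \<open>Shrinking the neighbourhood of x to a basic set B n, which is recorded by coordinate n of
  sat_code, removes the dependence on X, at the price of replacing V by its saturation.\<close>

lemma refined_saturation_neighbourhood:
  assumes "openin refined V" "x \<in> V"
  obtains Q where "openin cantor_space Q" "sat_code x \<in> Q" "{y \<in> topspace X. sat_code y \<in> Q} \<subseteq> E `` V"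
proof -
  obtain U Q where UQ: "openin X U" "openin cantor_space Q" "x \<in> U" "sat_code x \<in> Q"
      "{y \<in> U. sat_code y \<in> Q} \<subseteq> V"
    using openin_refined_imp_join_open[OF assms(1)] assms(2) unfolding join_open_def by blast
  obtain n where n: "x \<in> B n" "B n \<subseteq> U"
    using B_base[OF UQ(1,3)] by blast
  show thesis
  proof (rule that)
    show "openin cantor_space (Q \<inter> {z. z n})"
      using UQ(2) openin_cantor_space_coordinate by blast
    show "sat_code x \<in> Q \<inter> {z. z n}"
      using UQ(4) n(1) B_subset_sat by (auto simp: sat_code_def)
    show "{y \<in> topspace X. sat_code y \<in> Q \<inter> {z. z n}} \<subseteq> E `` V"
    proof
      fix y assume "y \<in> {y \<in> topspace X. sat_code y \<in> Q \<inter> {z. z n}}"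
      then have y: "sat_code y \<in> Q" "y \<in> sat n"
        by (auto simp: sat_code_def)
      then obtain b where b: "b \<in> B n" "(b, y) \<in> E"
        unfolding sat_def by blast
      moreover have "sat_code b \<in> Q"
        using sat_code_E[OF b(2)] y(1) by simp
      ultimately show "y \<in> E `` V"
        using n(2) UQ(5) by blast
    qed
  qed
qed

lemma refined_saturation_sat_code:
  assumes "openin refined V" "x \<in> E `` V" "y \<in> topspace X" "sat_code y = sat_code x"
  shows "y \<in> E `` V"
proof -
  obtain v where v: "v \<in> V" "(v, x) \<in> E"
    using assms(2) by blast
  obtain Q where Q: "openin cantor_space Q" "sat_code v \<in> Q" "{y \<in> topspace X. sat_code y \<in> Q} \<subseteq> E `` V"
    by (rule refined_saturation_neighbourhood[OF assms(1) v(1)])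
  have "sat_code y \<in> Q"
    using assms(4) sat_code_E[OF v(2)] Q(2) by simp
  then show ?thesis
    using assms(3) Q(3) by blast
qed

lemma closure_equiv_eq_sat_code_kernel:
  assumes "topspace T = topspace X" "\<And>V. openin X V \<Longrightarrow> openin T V"
    and "\<And>V. openin T V \<Longrightarrow> openin refined V"
  shows "closure_equiv T E = {(x, y). x \<in> topspace X \<and> y \<in> topspace X \<and> sat_code x = sat_code y}"
proof -
  have "(\<forall>V. openin T V \<longrightarrow> (x \<in> E `` V \<longleftrightarrow> y \<in> E `` V)) \<longleftrightarrow> sat_code x = sat_code y"
    if "x \<in> topspace X" "y \<in> topspace X" for x y
  proof
    assume "\<forall>V. openin T V \<longrightarrow> (x \<in> E `` V \<longleftrightarrow> y \<in> E `` V)"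
    then show "sat_code x = sat_code y"
      using assms(2)[OF openin_B] by (intro ext) (simp add: sat_code_def sat_def)
  next
    assume eq: "sat_code x = sat_code y"
    show "\<forall>V. openin T V \<longrightarrow> (x \<in> E `` V \<longleftrightarrow> y \<in> E `` V)"
    proof (intro allI impI)
      fix V assume "openin T V"
      then have V: "openin refined V"
        by (rule assms(3))
      show "x \<in> E `` V \<longleftrightarrow> y \<in> E `` V"
        using refined_saturation_sat_code[OF V _ that(2) eq[symmetric]]
          refined_saturation_sat_code[OF V _ that(1) eq] by blast
    qed
  qed
  moreover have "equiv (topspace T) E"
    using equiv_E assms(1) by simp
  ultimately show ?thesis
    using assms(1) by (auto simp: closure_equiv_iff_saturations)
qed

lemma open_map_sat_code: "open_map refined (subtopology cantor_space (sat_code ` topspace X)) sat_code"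
  unfolding open_map_def
proof (intro allI impI)
  fix V assume V: "openin refined V"
  show "openin (subtopology cantor_space (sat_code ` topspace X)) (sat_code ` V)"
    unfolding openin_subopen[of _ "sat_code ` V"]
  proof
    fix z assume "z \<in> sat_code ` V"
    then obtain x where x: "x \<in> V" "z = sat_code x"
      by blast
    obtain Q where Q: "openin cantor_space Q" "sat_code x \<in> Q"
        "{y \<in> topspace X. sat_code y \<in> Q} \<subseteq> E `` V"
      by (rule refined_saturation_neighbourhood[OF V x(1)])
    have "Q \<inter> sat_code ` topspace X \<subseteq> sat_code ` V"
    proof
      fix w assume "w \<in> Q \<inter> sat_code ` topspace X"
      then obtain y where y: "y \<in> topspace X" "w = sat_code y" "sat_code y \<in> Q"
        by blast
      then obtain v where v: "v \<in> V" "(v, y) \<in> E"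
        using Q(3) by blast
      have "w = sat_code v"
        using y(2) sat_code_E[OF v(2)] by simp
      then show "w \<in> sat_code ` V"
        using v(1) by blast
    qed
    moreover have "openin (subtopology cantor_space (sat_code ` topspace X)) (Q \<inter> sat_code ` topspace X)"
      using Q(1) by (rule openin_subtopology_Int)
    moreover have "x \<in> topspace X"
      using openin_subset[OF V] x(1) unfolding topspace_refined by blast
    then have "z \<in> Q \<inter> sat_code ` topspace X"
      using x(2) Q(2) by blast
    ultimately show "\<exists>T. openin (subtopology cantor_space (sat_code ` topspace X)) T \<and> z \<in> T \<and>
        T \<subseteq> sat_code ` V"
      by blast
  qed
qed

lemma quotient_map_sat_code:
  "quotient_map refined (subtopology cantor_space (sat_code ` topspace X)) sat_code"
proof (rule continuous_open_imp_quotient_map)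
  show "continuous_map refined (subtopology cantor_space (sat_code ` topspace X)) sat_code"
    by (rule continuous_map_into_subtopology[OF continuous_map_sat_code]) (unfold topspace_refined, simp)
  show "open_map refined (subtopology cantor_space (sat_code ` topspace X)) sat_code"
    by (rule open_map_sat_code)
  show "sat_code ` topspace refined = topspace (subtopology cantor_space (sat_code ` topspace X))"
    unfolding topspace_refined by simp
qed

lemma closure_quotient_refined_homeomorphic:
  "closure_quotient refined E homeomorphic_space subtopology cantor_space (sat_code ` topspace X)"
  unfolding closure_quotient_def
proof (rule homeomorphic_space_quotient_maps_same_fibres
    [OF quotient_map_quotient_topology quotient_map_sat_code])
  have "closure_equiv refined E = {(x, y). x \<in> topspace X \<and> y \<in> topspace X \<and> sat_code x = sat_code y}"
    by (rule closure_equiv_eq_sat_code_kernel[OF topspace_refined openin_refined])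
  then have classes: "closure_equiv refined E `` {x} = {y \<in> topspace X. sat_code x = sat_code y}"
    if "x \<in> topspace X" for x
    using that by auto
  fix x y assume "x \<in> topspace refined" "y \<in> topspace refined"
  then have x: "x \<in> topspace X" and y: "y \<in> topspace X"
    unfolding topspace_refined .
  show "closure_equiv refined E `` {x} = closure_equiv refined E `` {y} \<longleftrightarrow> sat_code x = sat_code y"
    unfolding classes[OF x] classes[OF y]
  proof
    assume "{w \<in> topspace X. sat_code x = sat_code w} = {w \<in> topspace X. sat_code y = sat_code w}"
    then show "sat_code x = sat_code y"
      using y by blast
  qed simp
qed

lemma closure_equiv_refined: "closure_equiv refined E = closure_equiv X E"
  using closure_equiv_eq_sat_code_kernel[OF topspace_refined openin_refined]
    closure_equiv_eq_sat_code_kernel[OF refl _ openin_refined] by simp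

end


section \<open>The image of the code of a quasi-Polish space\<close>

lemma finite_subset_Union_incseq:
  fixes S :: "nat \<Rightarrow> 'a set"
  assumes "incseq S" "finite t" "t \<subseteq> (\<Union>j. S j)"
  shows "\<exists>j. t \<subseteq> S j"
  using assms(2,3)
proof (induction t rule: finite_induct)
  case empty
  then show ?case by simp
next
  case (insert i t)
  then obtain j j' where "t \<subseteq> S j" "i \<in> S j'"
    by blast
  then have "insert i t \<subseteq> S (max j j')"
    using monoD[OF assms(1), of j "max j j'"] monoD[OF assms(1), of j' "max j j'"] by auto
  then show ?case
    by blast
qed

lemma openin_cantor_space_clause: "openin cantor_space {z. (\<exists>i\<in>I. \<not> z i) \<or> (\<exists>j\<in>J. z j)}"
proof -
  have "{z. (\<exists>i\<in>I. \<not> z i) \<or> (\<exists>j\<in>J. z j)} = (\<Union>i\<in>I. {z. \<not> z i}) \<union> (\<Union>j\<in>J. {z. z j})"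
    by auto
  moreover have "openin cantor_space (\<Union>i\<in>I. {z. \<not> z i})"
    by (rule openin_Union) (use openin_cantor_space_not_coordinate in blast)
  moreover have "openin cantor_space (\<Union>j\<in>J. {z. z j})"
    by (rule openin_Union) (use openin_cantor_space_coordinate in blast)
  ultimately show ?thesis
    by (simp add: openin_Un)
qed

locale quasi_Polish_embedding =
  fixes X :: "'a topology" and E :: "'a rel"
    and h :: "'a \<Rightarrow> nat \<Rightarrow> bool" and h' :: "(nat \<Rightarrow> bool) \<Rightarrow> 'a"
    and A :: "(nat \<Rightarrow> bool) set" and U F :: "nat \<Rightarrow> (nat \<Rightarrow> bool) set"
  assumes equiv_E: "equiv (topspace X) E"
    and openin_saturation: "\<And>V. openin X V \<Longrightarrow> openin X (E `` V)"
    and embedding: "homeomorphic_maps X (subtopology sierpinski_power A) h h'"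
    and openin_U: "\<And>k. openin sierpinski_power (U k)"
    and closedin_F: "\<And>k. closedin sierpinski_power (F k)"
    and A_eq: "A = (\<Inter>k. U k \<union> F k)"
begin

lemma h_in_A: "x \<in> topspace X \<Longrightarrow> h x \<in> A"
  using embedding unfolding homeomorphic_maps_def continuous_map_def by auto

lemma h'_in_topspace: "a \<in> A \<Longrightarrow> h' a \<in> topspace X"
  using embedding unfolding homeomorphic_maps_def continuous_map_def by auto

lemma h'_h: "x \<in> topspace X \<Longrightarrow> h' (h x) = x"
  using embedding unfolding homeomorphic_maps_def by auto

lemma h_h': "a \<in> A \<Longrightarrow> h (h' a) = a"
  using embedding unfolding homeomorphic_maps_def by auto

definition cylinder :: "nat set \<Rightarrow> 'a set" where
  "cylinder t = {x \<in> topspace X. h x \<in> sierpinski_box t}"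

definition basic :: "nat \<Rightarrow> 'a set" where
  "basic n = cylinder (set_decode n)"

lemma cylinder_Un: "cylinder (s \<union> t) = cylinder s \<inter> cylinder t"
  unfolding cylinder_def sierpinski_box_def by auto

lemma basic_set_encode: "finite t \<Longrightarrow> basic (set_encode t) = cylinder t"
  by (simp add: basic_def)

lemma basic_0: "basic 0 = topspace X"
  by (simp add: basic_def cylinder_def sierpinski_box_def)

lemma openin_basic: "openin X (basic n)"
proof -
  have "continuous_map X sierpinski_power h"
    using embedding continuous_map_into_fulltopology unfolding homeomorphic_maps_def by blast
  then show ?thesis
    unfolding basic_def cylinder_def
    using openin_continuous_map_preimage openin_sierpinski_box finite_set_decode by blast
qed

lemma cylinder_base:
  assumes "openin X V" "x \<in> V"
  obtains t where "finite t" "x \<in> cylinder t" "cylinder t \<subseteq> V"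
proof -
  have x: "x \<in> topspace X"
    using assms openin_subset by blast
  have "continuous_map (subtopology sierpinski_power A) X h'"
    using embedding by (simp add: homeomorphic_maps_def)
  from openin_continuous_map_preimage[OF this assms(1)]
  have "openin (subtopology sierpinski_power A) {a \<in> A. h' a \<in> V}"
    by simp
  then obtain W where W: "openin sierpinski_power W" "{a \<in> A. h' a \<in> V} = W \<inter> A"
    unfolding openin_subtopology by blast
  then have W_iff: "a \<in> A \<Longrightarrow> a \<in> W \<longleftrightarrow> h' a \<in> V" for a
    by (simp add: set_eq_iff) blast
  have "h x \<in> W"
    using W_iff[OF h_in_A[OF x]] h'_h[OF x] assms(2) by simp
  then obtain t where t: "finite t" "h x \<in> sierpinski_box t" "sierpinski_box t \<subseteq> W"
    by (rule sierpinski_power_base[OF W(1)])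
  have "x \<in> cylinder t"
    using x t(2) by (simp add: cylinder_def)
  moreover have "cylinder t \<subseteq> V"
  proof
    fix y assume "y \<in> cylinder t"
    then have y: "y \<in> topspace X" "h y \<in> W"
      using t(3) unfolding cylinder_def by auto
    then show "y \<in> V"
      using W_iff[OF h_in_A[OF y(1)]] h'_h[OF y(1)] by simp
  qed
  ultimately show thesis
    by (rule that[OF t(1)])
qed

sublocale saturated_basis X E basic
proof
  show "openin X (basic n)" for n
    by (rule openin_basic)
  show "\<exists>n. x \<in> basic n \<and> basic n \<subseteq> V" if V: "openin X V" "x \<in> V" for V x
  proof -
    obtain t where t: "finite t" "x \<in> cylinder t" "cylinder t \<subseteq> V"
      by (rule cylinder_base[OF V])
    then show ?thesis
      using basic_set_encode[OF t(1)] by (intro exI[of _ "set_encode t"]) simp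
  qed
qed (use equiv_E openin_saturation in auto)

text \<open>The last clause of refines makes the limit of a refining sequence land in A: once a box
  avoids the closed set F k, the next box is forced into U k.\<close>

definition refines :: "nat \<Rightarrow> nat \<Rightarrow> nat \<Rightarrow> nat \<Rightarrow> bool" where
  "refines n m k n' \<longleftrightarrow> set_decode n \<subseteq> set_decode n' \<and> basic n' \<subseteq> sat m \<and>
     (sierpinski_box (set_decode n) \<inter> F k = {} \<longrightarrow> sierpinski_box (set_decode n') \<subseteq> U k)"

definition code_space :: "(nat \<Rightarrow> bool) set" where
  "code_space = {z. z 0 \<and> (\<forall>n m. basic n \<subseteq> sat m \<longrightarrow> z n \<longrightarrow> z m) \<and>
     (\<forall>n m k. z n \<longrightarrow> z m \<longrightarrow> (\<exists>n'. refines n m k n' \<and> z n'))}"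

lemma gdelta_in_code_space: "gdelta_in cantor_space code_space"
proof -
  define \<O>\<^sub>2 where "\<O>\<^sub>2 = (\<lambda>(n, m). {z. z n \<longrightarrow> z m}) ` {(n, m). basic n \<subseteq> sat m}"
  define \<O>\<^sub>3 where "\<O>\<^sub>3 = (\<lambda>(n, m, k). {z. z n \<longrightarrow> z m \<longrightarrow> (\<exists>n'. refines n m k n' \<and> z n')}) ` UNIV"
  have "code_space = {z. z 0} \<inter> \<Inter> \<O>\<^sub>2 \<inter> \<Inter> \<O>\<^sub>3"
    unfolding code_space_def \<O>\<^sub>2_def \<O>\<^sub>3_def by (simp add: set_eq_iff)
  moreover have "openin cantor_space V" if "V \<in> \<O>\<^sub>2 \<union> \<O>\<^sub>3" for V
  proof -
    have "openin cantor_space {z. z n \<longrightarrow> z m}" for n m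
      using openin_cantor_space_clause[of "{n}" "{m}"] by simp
    moreover have "openin cantor_space {z. z n \<longrightarrow> z m \<longrightarrow> (\<exists>n'. refines n m k n' \<and> z n')}" for n m k
      using openin_cantor_space_clause[of "{n, m}" "{n'. refines n m k n'}"] by simp
    ultimately show ?thesis
      using that unfolding \<O>\<^sub>2_def \<O>\<^sub>3_def by auto
  qed
  moreover have "\<O>\<^sub>2 \<noteq> {}"
    using B_subset_sat unfolding \<O>\<^sub>2_def by blast
  moreover have "countable \<O>\<^sub>2" "countable \<O>\<^sub>3" "\<O>\<^sub>3 \<noteq> {}"
    unfolding \<O>\<^sub>2_def \<O>\<^sub>3_def by simp_all
  ultimately show ?thesis
    by (simp add: gdelta_in_Int gdelta_in_Inter open_imp_gdelta_in openin_cantor_space_coordinate)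
qed

lemma refines_exists:
  assumes "b \<in> basic n" "b \<in> sat m"
  obtains n' where "refines n m k n'" "b \<in> basic n'"
proof -
  have b: "b \<in> topspace X" "h b \<in> sierpinski_box (set_decode n)"
    using assms(1) by (auto simp: basic_def cylinder_def)
  obtain t where t: "finite t" "h b \<in> sierpinski_box t"
      "sierpinski_box (set_decode n) \<inter> F k = {} \<Longrightarrow> sierpinski_box t \<subseteq> U k"
  proof (cases "sierpinski_box (set_decode n) \<inter> F k = {}")
    case True
    then have "h b \<in> U k"
      using h_in_A[OF b(1)] b(2) A_eq by blast
    then obtain t where "finite t" "h b \<in> sierpinski_box t" "sierpinski_box t \<subseteq> U k"
      by (rule sierpinski_power_base[OF openin_U])
    then show thesis
      by (rule that)
  next
    case False
    then show thesis
      by (intro that[of "{}"]) (simp_all add: sierpinski_box_def)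
  qed
  obtain t' where t': "finite t'" "b \<in> cylinder t'" "cylinder t' \<subseteq> sat m"
    by (rule cylinder_base[OF openin_sat assms(2)])
  define n' where "n' = set_encode (set_decode n \<union> t \<union> t')"
  have decode: "set_decode n' = set_decode n \<union> t \<union> t'"
    unfolding n'_def using t(1) t'(1) by (simp add: finite_set_decode)
  have basic_n': "basic n' = basic n \<inter> cylinder t \<inter> cylinder t'"
    by (simp add: basic_def decode cylinder_Un)
  have "refines n m k n'"
    unfolding refines_def
  proof (intro conjI impI)
    show "set_decode n \<subseteq> set_decode n'"
      unfolding decode by blast
    show "basic n' \<subseteq> sat m"
      using basic_n' t'(3) by blast
    show "sierpinski_box (set_decode n') \<subseteq> U k" if "sierpinski_box (set_decode n) \<inter> F k = {}"
      using t(3)[OF that] sierpinski_box_antimono[of t "set_decode n'"] decode by blast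
  qed
  moreover have "b \<in> basic n'"
    using basic_n' assms(1) t(2) t'(2) b(1) by (simp add: cylinder_def)
  ultimately show thesis
    by (rule that)
qed

lemma sat_code_in_code_space:
  assumes "x \<in> topspace X"
  shows "sat_code x \<in> code_space"
  unfolding code_space_def mem_Collect_eq
proof (intro conjI allI impI)
  show "sat_code x 0"
    using assms B_subset_sat[of 0] basic_0 by (auto simp: sat_code_def)
  show "sat_code x m" if "basic n \<subseteq> sat m" "sat_code x n" for n m
    using that sat_E_invariant unfolding sat_code_def sat_def by blast
  show "\<exists>n'. refines n m k n' \<and> sat_code x n'" if "sat_code x n" "sat_code x m" for n m k
  proof -
    from that obtain b where b: "b \<in> basic n" "(b, x) \<in> E" "x \<in> sat m"
      unfolding sat_code_def sat_def by blast
    then have "b \<in> sat m"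
      using sat_E_invariant by blast
    then obtain n' where "refines n m k n'" "b \<in> basic n'"
      by (rule refines_exists[OF b(1)])
    then show "\<exists>n'. refines n m k n' \<and> sat_code x n'"
      using b(2) unfolding sat_code_def sat_def by blast
  qed
qed

lemma refines_chain:
  assumes "z \<in> code_space" "\<And>j. z (m j)"
  obtains s where "\<And>j. z (s j)" "\<And>j. refines (s j) (m j) (k j) (s (Suc j))"
proof -
  have "\<exists>s. \<forall>j. z (s j) \<and> refines (s j) (m j) (k j) (s (Suc j))"
  proof (rule dependent_nat_choice[where P = "\<lambda>_ n. z n" and Q = "\<lambda>j n n'. refines n (m j) (k j) n'"])
    show "\<exists>n. z n"
      using assms(1) by (auto simp: code_space_def)
    have "\<forall>n m k. z n \<longrightarrow> z m \<longrightarrow> (\<exists>n'. refines n m k n' \<and> z n')"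
      using assms(1) by (simp add: code_space_def)
    then show "\<exists>n'. z n' \<and> refines n (m j) (k j) n'" if "z n" for n j
      using assms(2)[of j] that by blast
  qed
  then show thesis
    using that by blast
qed

lemma refines_chain_incseq:
  assumes "\<And>j. refines (s j) (m j) (k j) (s (Suc j))"
  shows "incseq (\<lambda>j. set_decode (s j))"
  using assms by (simp add: incseq_Suc_iff refines_def)

lemma refines_chain_limit_in_A:
  assumes refines: "\<And>j. refines (s j) (m j) (k j) (s (Suc j))"
    and recurrent: "\<And>\<kappa> J. \<exists>j\<ge>J. k j = \<kappa>"
  shows "(\<lambda>i. \<exists>j. i \<in> set_decode (s j)) \<in> A"
proof -
  define a where "a = (\<lambda>i. \<exists>j. i \<in> set_decode (s j))"
  have a_box: "a \<in> sierpinski_box (set_decode (s j))" for j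
    unfolding a_def sierpinski_box_def by blast
  have "a \<in> U \<kappa> \<union> F \<kappa>" for \<kappa>
  proof (cases "a \<in> F \<kappa>")
    case False
    have "openin sierpinski_power (UNIV - F \<kappa>)"
      using closedin_F[of \<kappa>] by (simp add: closedin_def)
    moreover have "a \<in> UNIV - F \<kappa>"
      using False by blast
    ultimately obtain t where t: "finite t" "a \<in> sierpinski_box t" "sierpinski_box t \<subseteq> UNIV - F \<kappa>"
      by (rule sierpinski_power_base)
    have "t \<subseteq> (\<Union>j. set_decode (s j))"
      using t(2) unfolding sierpinski_box_def a_def by blast
    then obtain J where J: "t \<subseteq> set_decode (s J)"
      using finite_subset_Union_incseq[OF refines_chain_incseq[of s m k, OF refines] t(1)] by blast
    obtain j where j: "J \<le> j" "k j = \<kappa>"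
      using recurrent by blast
    have "t \<subseteq> set_decode (s j)"
      using J monoD[OF refines_chain_incseq[of s m k, OF refines] j(1)] by blast
    then have "sierpinski_box (set_decode (s j)) \<inter> F \<kappa> = {}"
      using sierpinski_box_antimono t(3) by blast
    then have "sierpinski_box (set_decode (s (Suc j))) \<subseteq> U \<kappa>"
      using refines[of j] j(2) by (simp add: refines_def)
    then show ?thesis
      using a_box by blast
  qed simp
  then show ?thesis
    unfolding A_eq a_def by blast
qed

lemma sat_code_refines_chain_limit:
  assumes z: "z \<in> code_space" and zs: "\<And>j. z (s j)"
    and refines: "\<And>j. refines (s j) (m j) (k j) (s (Suc j))"
    and targets: "\<And>n. z n \<Longrightarrow> \<exists>j. m j = n"
    and limit: "(\<lambda>i. \<exists>j. i \<in> set_decode (s j)) \<in> A"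
  shows "sat_code (h' (\<lambda>i. \<exists>j. i \<in> set_decode (s j))) = z"
proof -
  define x where "x = h' (\<lambda>i. \<exists>j. i \<in> set_decode (s j))"
  have x: "x \<in> topspace X" "h x = (\<lambda>i. \<exists>j. i \<in> set_decode (s j))"
    unfolding x_def using h'_in_topspace[OF limit] h_h'[OF limit] by auto
  have x_basic: "x \<in> basic (s j)" for j
    using x unfolding basic_def cylinder_def sierpinski_box_def by auto
  have "sat_code x n = z n" for n
  proof
    assume "sat_code x n"
    then obtain t where t: "finite t" "x \<in> cylinder t" "cylinder t \<subseteq> sat n"
      unfolding sat_code_def by (rule cylinder_base[OF openin_sat])
    have "t \<subseteq> (\<Union>j. set_decode (s j))"
      using t(2) x(2) unfolding cylinder_def sierpinski_box_def by auto
    then obtain J where "t \<subseteq> set_decode (s J)"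
      using finite_subset_Union_incseq[OF refines_chain_incseq[of s m k, OF refines] t(1)] by blast
    then have "basic (s J) \<subseteq> sat n"
      using t(3) sierpinski_box_antimono unfolding basic_def cylinder_def by blast
    then show "z n"
      using z zs[of J] by (auto simp: code_space_def)
  next
    assume "z n"
    then obtain j where "m j = n"
      using targets by blast
    then have "basic (s (Suc j)) \<subseteq> sat n"
      using refines[of j] by (simp add: refines_def)
    then show "sat_code x n"
      using x_basic unfolding sat_code_def by blast
  qed
  then show ?thesis
    unfolding x_def by blast
qed

lemma code_space_subset_image:
  assumes z: "z \<in> code_space"
  shows "z \<in> sat_code ` topspace X"
proof -
  text \<open>Step j of the chain aims at U (fst (prod_decode j)) and at sat (snd (prod_decode j)) if z
    claims this set; otherwise at sat 0, which is all of X.\<close>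
  define k where "k j = fst (prod_decode j)" for j
  define m where "m j = (if z (snd (prod_decode j)) then snd (prod_decode j) else 0)" for j
  have "z (m j)" for j
    using z by (auto simp: m_def code_space_def)
  then obtain s where zs: "\<And>j. z (s j)" and refines: "\<And>j. refines (s j) (m j) (k j) (s (Suc j))"
    using refines_chain[of z m k, OF z] by blast
  have "\<exists>j\<ge>J. k j = \<kappa>" for \<kappa> J
    by (intro exI[of _ "prod_encode (\<kappa>, J)"]) (simp add: k_def le_prod_encode_2)
  then have limit: "(\<lambda>i. \<exists>j. i \<in> set_decode (s j)) \<in> A"
    by (rule refines_chain_limit_in_A[of s m k, OF refines])
  have "m (prod_encode (0, n)) = n" if "z n" for n
    using that by (simp add: m_def)
  then have "sat_code (h' (\<lambda>i. \<exists>j. i \<in> set_decode (s j))) = z"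
    by (intro sat_code_refines_chain_limit[OF z zs refines _ limit]) blast
  then show ?thesis
    using h'_in_topspace[OF limit] by blast
qed

lemma image_sat_code: "sat_code ` topspace X = code_space"
  using sat_code_in_code_space code_space_subset_image by blast

lemma Polish_space_closure_quotient_refined: "Polish_space (closure_quotient refined E)"
proof -
  have "Polish_space (subtopology cantor_space (sat_code ` topspace X))"
    unfolding image_sat_code by (rule Polish_space_gdelta_in_cantor_space[OF gdelta_in_code_space])
  then show ?thesis
    using closure_quotient_refined_homeomorphic homeomorphic_Polish_space by blast
qed

end

theorem corollary2p4:
  fixes X :: "'a topology" and E :: "'a rel"
  assumes "quasi_Polish_space X"
    and "equiv (topspace X) E"
    and "\<forall>U. openin X U \<longrightarrow> openin X (E `` U)"
  shows "\<exists>C :: 'a set set. countable C \<and> (\<forall>F\<in>C. closedin X F \<and> E `` F = F) \<and>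
           closure_equiv (topology_generated_by ({U. openin X U} \<union> C)) E = closure_equiv X E \<and>
           Polish_space (closure_quotient (topology_generated_by ({U. openin X U} \<union> C)) E)"
proof -
  obtain A where A: "Pi02_in sierpinski_power A" "X homeomorphic_space subtopology sierpinski_power A"
    using assms(1) unfolding quasi_Polish_space_def by blast
  obtain U F :: "nat \<Rightarrow> (nat \<Rightarrow> bool) set" where
    UF: "\<forall>n. openin sierpinski_power (U n) \<and> closedin sierpinski_power (F n)" "A = (\<Inter>n. U n \<union> F n)"
    using A(1) unfolding Pi02_in_def by auto
  obtain h h' where "homeomorphic_maps X (subtopology sierpinski_power A) h h'"
    using A(2) unfolding homeomorphic_space_def by blast
  then interpret quasi_Polish_embedding X E h h' A U F
    using assms(2,3) UF by unfold_locales auto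
  show ?thesis
    by (intro exI[of _ invariant_closed] conjI ballI countable_invariant_closed invariant_closedD
        closure_equiv_refined Polish_space_closure_quotient_refined)
qed

end
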